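(* Consider the Maxwell--Bloch system \[ \dot A=B,\quad \dot B=-\Omega^2A-\sigma B+cj(t),\quad i\hbar\dot C_1=\hbar\omega_1C_1+ia(t)C_2,\quad i\hbar\dot C_2=\hbar\omega_2C_2-ia(t)C_1,\qquad t>0, \] with $j(t)=2q\,\mathrm{Im}[\overline{C_1(t)}C_2(t)]$, $a(t)=\frac qc[A(t)+A_p(t)]$, where $A_p\in C[0,\infty)$ is real-valued. Then there exist constants $d_1,d_2,\gamma>0$ such that every solution with $|C_1(t)|^2+|C_2(t)|^2=1$ satisfies \[ |A(t)|^2+|B(t)|^2\le d_1\big(|A(0)|^2+|B(0)|^2\big)e^{-\gamma t}+d_2,\qquad t>0. \]
   Context: Parameters: $\Omega>0$, $\sigma>0$, $c>0$, $\hbar>0$, real $\omega_2>\omega_1$, $p>0$, $\omega=\omega_2-\omega_1$, $q=\omega p$. Unknowns: $A(t),B(t)\in\mathbb R$, $C_1(t),C_2(t)\in\mathbb C$. *)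

theory Defs
  imports "HOL-Analysis.Analysis"
begin

end

theory Submission
  imports Defs
begin

(* The amplitudes C1, C2 enter the field equation only through the current
   j = 2 q Im (cnj C1 * C2), and the normalisation |C1|^2 + |C2|^2 = 1 alone gives
   |j| <= q.  Hence A is a damped
   oscillator A'' + sigma A' + Omega^2 A = c j with a forcing bounded by c q.
   For such an oscillator the perturbed energy V = Omega^2 A^2 + B^2 + 2 e A B,
   with e > 0 small (4 e (Omega^2 + sigma^2) <= sigma Omega^2), is equivalent to
   A^2 + B^2, and Young's inequality on each cross term of V' gives
   V' + (e/3) V <= K.  Integrating this differential inequality yields
   V t <= V 0 * exp (- e t / 3) + 3 K / e. *)

lemma weighted_young:
  fixes r x y :: real
  assumes "r > 0"
  shows "2 * x * y \<le> r * x\<^sup>2 + y\<^sup>2 / r"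
proof -
  have "0 \<le> (r * x - y)\<^sup>2 / r" using assms by simp
  also have "\<dots> = r * x\<^sup>2 + y\<^sup>2 / r - 2 * x * y"
    using assms by (simp add: field_simps power2_eq_square)
  finally show ?thesis by simp
qed

lemma cross_term_bound:
  fixes w e a b :: real
  assumes "\<bar>e\<bar> \<le> w / 2"
  shows "\<bar>2 * e * a * b\<bar> \<le> (w\<^sup>2 * a\<^sup>2 + b\<^sup>2) / 2"
proof -
  have "\<bar>2 * e * a * b\<bar> = 2 * \<bar>e\<bar> * (\<bar>a\<bar> * \<bar>b\<bar>)" by (simp add: abs_mult)
  also have "\<dots> \<le> w * (\<bar>a\<bar> * \<bar>b\<bar>)" using assms by (intro mult_right_mono) auto
  also have "\<dots> \<le> ((w * \<bar>a\<bar>)\<^sup>2 + \<bar>b\<bar>\<^sup>2) / 2"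
    using sum_squares_bound[of "w * \<bar>a\<bar>" "\<bar>b\<bar>"] by (simp add: algebra_simps)
  also have "\<dots> = (w\<^sup>2 * a\<^sup>2 + b\<^sup>2) / 2" by (simp add: power_mult_distrib)
  finally show ?thesis .
qed

lemma lyapunov_coefficient_bounds:
  fixes w s e :: real
  assumes "w > 0" "s > 0" "e \<ge> 0" and e: "4 * e * (w\<^sup>2 + s\<^sup>2) \<le> s * w\<^sup>2"
  shows "e \<le> s / 4" "e \<le> w / 8"
proof -
  have "4 * e * w\<^sup>2 \<le> 4 * e * (w\<^sup>2 + s\<^sup>2)" using assms(3) by (intro mult_left_mono) auto
  then have "(4 * e) * w\<^sup>2 \<le> s * w\<^sup>2" using e by linarith
  then show "e \<le> s / 4" using assms(1) by simp
  have "4 * e * (2 * w * s) \<le> 4 * e * (w\<^sup>2 + s\<^sup>2)"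
    using sum_squares_bound[of w s] assms(3) by (intro mult_left_mono) auto
  then have "(8 * e) * (w * s) \<le> w * (w * s)" using e by (simp add: algebra_simps power2_eq_square)
  then show "e \<le> w / 8" using assms(1,2) by simp
qed

lemma lyapunov_equivalent_norm:
  fixes w e a b :: real
  assumes "w > 0" "\<bar>e\<bar> \<le> w / 2"
  shows "a\<^sup>2 + b\<^sup>2 \<le> 2 * (1 + w\<^sup>2) / w\<^sup>2 * (w\<^sup>2 * a\<^sup>2 + b\<^sup>2 + 2 * e * a * b)"
    and "w\<^sup>2 * a\<^sup>2 + b\<^sup>2 + 2 * e * a * b \<le> 3 / 2 * (1 + w\<^sup>2) * (a\<^sup>2 + b\<^sup>2)"
proof -
  have cross: "\<bar>2 * e * a * b\<bar> \<le> (w\<^sup>2 * a\<^sup>2 + b\<^sup>2) / 2"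
    using cross_term_bound[OF assms(2)] .
  have lower: "w\<^sup>2 * a\<^sup>2 + b\<^sup>2 \<le> 2 * (w\<^sup>2 * a\<^sup>2 + b\<^sup>2 + 2 * e * a * b)"
    using cross unfolding abs_le_iff by (simp add: algebra_simps)
  have "a\<^sup>2 + b\<^sup>2 \<le> (1 + w\<^sup>2) / w\<^sup>2 * (w\<^sup>2 * a\<^sup>2 + b\<^sup>2)"
    using assms(1) by (simp add: field_simps)
  also have "\<dots> \<le> (1 + w\<^sup>2) / w\<^sup>2 * (2 * (w\<^sup>2 * a\<^sup>2 + b\<^sup>2 + 2 * e * a * b))"
    using lower by (intro mult_left_mono) auto
  also have "\<dots> = 2 * (1 + w\<^sup>2) / w\<^sup>2 * (w\<^sup>2 * a\<^sup>2 + b\<^sup>2 + 2 * e * a * b)"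
    by (simp add: algebra_simps)
  finally show "a\<^sup>2 + b\<^sup>2 \<le> 2 * (1 + w\<^sup>2) / w\<^sup>2 * (w\<^sup>2 * a\<^sup>2 + b\<^sup>2 + 2 * e * a * b)" .
  have "w\<^sup>2 * a\<^sup>2 + b\<^sup>2 + 2 * e * a * b \<le> 3 / 2 * (w\<^sup>2 * a\<^sup>2 + b\<^sup>2)"
    using cross unfolding abs_le_iff by (simp add: algebra_simps)
  also have "\<dots> \<le> 3 / 2 * ((1 + w\<^sup>2) * (a\<^sup>2 + b\<^sup>2))"
    by (simp add: algebra_simps)
  also have "\<dots> = 3 / 2 * (1 + w\<^sup>2) * (a\<^sup>2 + b\<^sup>2)"
    by (simp only: mult.assoc)
  finally show "w\<^sup>2 * a\<^sup>2 + b\<^sup>2 + 2 * e * a * b \<le> 3 / 2 * (1 + w\<^sup>2) * (a\<^sup>2 + b\<^sup>2)" .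
qed

lemma lyapunov_rate_bound:
  fixes w s e a b f F :: real
  assumes "w > 0" "s > 0" "e \<ge> 0" and e: "4 * e * (w\<^sup>2 + s\<^sup>2) \<le> s * w\<^sup>2"
    and "\<bar>f\<bar> \<le> F"
  shows "2 * w\<^sup>2 * a * b + 2 * b * (- w\<^sup>2 * a - s * b + f) + 2 * e * (b\<^sup>2 + a * (- w\<^sup>2 * a - s * b + f))
      + e / 3 * (w\<^sup>2 * a\<^sup>2 + b\<^sup>2 + 2 * e * a * b)
    \<le> 2 * F\<^sup>2 / s + e * F\<^sup>2 / w\<^sup>2"
proof -
  have "e \<le> s / 4" "e \<le> w / 8" using lyapunov_coefficient_bounds[OF assms(1-4)] by auto
  have young_bf: "2 * (b * f) \<le> s * b\<^sup>2 / 2 + 2 * (f\<^sup>2 / s)"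
    using weighted_young[of "s / 2" b f] assms(2) by simp
  have young_af: "2 * (e * (a * f)) \<le> e * (w\<^sup>2 * a\<^sup>2) + e * (f\<^sup>2 / w\<^sup>2)"
    using mult_left_mono[OF weighted_young[of "w\<^sup>2" a f] assms(3)] assms(1) by (simp add: algebra_simps)
  have young_ab: "- 2 * (e * (s * (a * b))) \<le> e * (w\<^sup>2 * a\<^sup>2) / 2 + 2 * (e * (s\<^sup>2 * b\<^sup>2 / w\<^sup>2))"
    using mult_left_mono[OF weighted_young[of "w\<^sup>2 / 2" a "- s * b"] assms(3)] assms(1)
    by (simp add: algebra_simps power_mult_distrib)
  have "\<bar>e\<bar> \<le> w / 2" using assms(3) \<open>e \<le> w / 8\<close> by simp
  have cross: "2 * (e * (e * (a * b))) \<le> e * (w\<^sup>2 * a\<^sup>2) / 2 + e * b\<^sup>2 / 2"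
    using mult_left_mono[OF abs_le_D1[OF cross_term_bound[OF \<open>\<bar>e\<bar> \<le> w / 2\<close>, of a b]] assms(3)]
    by (simp add: algebra_simps)
  have damping: "2 * (e * b\<^sup>2) + 2 * (e * (s\<^sup>2 * b\<^sup>2 / w\<^sup>2)) \<le> s * b\<^sup>2 / 2"
  proof -
    have "2 * (e * b\<^sup>2) + 2 * (e * (s\<^sup>2 * b\<^sup>2 / w\<^sup>2)) = 4 * e * (w\<^sup>2 + s\<^sup>2) * b\<^sup>2 / (2 * w\<^sup>2)"
      using assms(1) by (simp add: field_simps)
    also have "\<dots> \<le> s * w\<^sup>2 * b\<^sup>2 / (2 * w\<^sup>2)"
      using e by (intro divide_right_mono mult_right_mono) auto
    also have "\<dots> = s * b\<^sup>2 / 2" using assms(1) by simp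
    finally show ?thesis .
  qed
  have slack: "e * b\<^sup>2 \<le> s * b\<^sup>2" "0 \<le> s * b\<^sup>2"
    using assms(2) \<open>e \<le> s / 4\<close> by (auto intro: mult_right_mono)
  have "f\<^sup>2 \<le> F\<^sup>2" using assms(5) by (metis abs_ge_zero abs_le_square_iff abs_of_nonneg order_trans)
  then have forcing: "f\<^sup>2 / s \<le> F\<^sup>2 / s" "e * (f\<^sup>2 / w\<^sup>2) \<le> e * (F\<^sup>2 / w\<^sup>2)"
    using assms(1-3) by (auto intro: divide_right_mono mult_left_mono)
  txt \<open>Each monomial is written in one fixed shape, so that \<open>linarith\<close> sees it as a single atom.\<close>
  have "2 * w\<^sup>2 * a * b + 2 * b * (- w\<^sup>2 * a - s * b + f) + 2 * e * (b\<^sup>2 + a * (- w\<^sup>2 * a - s * b + f))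
      + e / 3 * (w\<^sup>2 * a\<^sup>2 + b\<^sup>2 + 2 * e * a * b)
    = - 2 * (s * b\<^sup>2) + 2 * (b * f) + 2 * (e * b\<^sup>2) - 2 * (e * (w\<^sup>2 * a\<^sup>2)) - 2 * (e * (s * (a * b)))
      + 2 * (e * (a * f)) + e * (w\<^sup>2 * a\<^sup>2) / 3 + e * b\<^sup>2 / 3 + 2 * (e * (e * (a * b))) / 3"
    by (simp add: algebra_simps power2_eq_square)
  also have "\<dots> \<le> 2 * (F\<^sup>2 / s) + e * (F\<^sup>2 / w\<^sup>2)"
    using young_bf young_af young_ab cross damping slack forcing by linarith
  also have "\<dots> = 2 * F\<^sup>2 / s + e * F\<^sup>2 / w\<^sup>2" by simp
  finally show ?thesis .
qed

lemma differential_inequality_exp_bound: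
  fixes V V' :: "real \<Rightarrow> real" and g K t :: real
  assumes "g > 0" "K \<ge> 0" "continuous_on {0..} V"
    and deriv: "\<And>x. x > 0 \<Longrightarrow> (V has_real_derivative V' x) (at x)"
    and ineq: "\<And>x. x > 0 \<Longrightarrow> V' x + g * V x \<le> K"
    and "t > 0"
  shows "V t \<le> V 0 * exp (- g * t) + K / g"
proof -
  define W where "W x = (V x - K / g) * exp (g * x)" for x
  have W_deriv: "(W has_real_derivative (V' x + g * V x - K) * exp (g * x)) (at x)" if "x > 0" for x
  proof -
    have "(W has_real_derivative V' x * exp (g * x) + (V x - K / g) * (exp (g * x) * g)) (at x)"
      unfolding W_def by (auto intro!: derivative_eq_intros deriv[OF that])
    also have "V' x * exp (g * x) + (V x - K / g) * (exp (g * x) * g) = (V' x + g * V x - K) * exp (g * x)"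
      using assms(1) by (simp add: field_simps)
    finally show ?thesis .
  qed
  have "W t \<le> W 0"
  proof (rule DERIV_nonpos_imp_decreasing_open[of 0 t W])
    show "\<exists>y. (W has_real_derivative y) (at x) \<and> y \<le> 0" if "0 < x" "x < t" for x
      using W_deriv[OF that(1)] ineq[OF that(1)] by (auto simp: mult_nonpos_nonneg)
    show "continuous_on {0..t} W"
      unfolding W_def by (intro continuous_intros continuous_on_subset[OF assms(3)]) auto
  qed (use \<open>t > 0\<close> in simp)
  then have "V t - K / g \<le> (V 0 - K / g) * exp (- g * t)"
    by (simp add: W_def exp_minus field_simps)
  also have "\<dots> \<le> V 0 * exp (- g * t)"
    using assms(1,2) by (intro mult_right_mono) auto
  finally show ?thesis by simp
qed

lemma damped_oscillator_bound:
  fixes w s e F t :: real and A B f :: "real \<Rightarrow> real"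
  assumes "w > 0" "s > 0" "e > 0" and e: "4 * e * (w\<^sup>2 + s\<^sup>2) \<le> s * w\<^sup>2"
    and "continuous_on {0..} A" "continuous_on {0..} B"
    and A_deriv: "\<And>x. x > 0 \<Longrightarrow> (A has_real_derivative B x) (at x)"
    and B_deriv: "\<And>x. x > 0 \<Longrightarrow> (B has_real_derivative - w\<^sup>2 * A x - s * B x + f x) (at x)"
    and f_bound: "\<And>x. x > 0 \<Longrightarrow> \<bar>f x\<bar> \<le> F"
    and "t > 0"
  shows "(A t)\<^sup>2 + (B t)\<^sup>2 \<le> 3 * (1 + w\<^sup>2)\<^sup>2 / w\<^sup>2 * ((A 0)\<^sup>2 + (B 0)\<^sup>2) * exp (- (e / 3) * t)
           + 6 * (1 + w\<^sup>2) / (w\<^sup>2 * e) * (2 * F\<^sup>2 / s + e * F\<^sup>2 / w\<^sup>2)"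
proof -
  define V where "V x = w\<^sup>2 * (A x)\<^sup>2 + (B x)\<^sup>2 + 2 * e * A x * B x" for x
  define V' where "V' x = 2 * w\<^sup>2 * A x * B x + 2 * B x * (- w\<^sup>2 * A x - s * B x + f x)
      + 2 * e * ((B x)\<^sup>2 + A x * (- w\<^sup>2 * A x - s * B x + f x))" for x
  define K where "K = 2 * F\<^sup>2 / s + e * F\<^sup>2 / w\<^sup>2"
  have "\<bar>e\<bar> \<le> w / 2" using lyapunov_coefficient_bounds[OF assms(1,2) _ e] assms(3) by simp
  have "K \<ge> 0" unfolding K_def using assms(2,3) by simp
  have "continuous_on {0..} V"
    unfolding V_def using assms(5,6) by (intro continuous_intros)
  moreover have "(V has_real_derivative V' x) (at x)" if "x > 0" for x
    unfolding V_def V'_def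
    by (auto intro!: derivative_eq_intros A_deriv[OF that] B_deriv[OF that] simp: algebra_simps power2_eq_square)
  moreover have "V' x + e / 3 * V x \<le> K" if "x > 0" for x
    unfolding V_def V'_def K_def using lyapunov_rate_bound[OF assms(1,2) _ e f_bound[OF that]] assms(3) by simp
  ultimately have V_decay: "V t \<le> V 0 * exp (- (e / 3) * t) + K / (e / 3)"
    using assms(3) \<open>K \<ge> 0\<close> \<open>t > 0\<close> by (intro differential_inequality_exp_bound) auto
  have "(A t)\<^sup>2 + (B t)\<^sup>2 \<le> 2 * (1 + w\<^sup>2) / w\<^sup>2 * V t"
    unfolding V_def using lyapunov_equivalent_norm(1)[OF assms(1) \<open>\<bar>e\<bar> \<le> w / 2\<close>] .
  also have "\<dots> \<le> 2 * (1 + w\<^sup>2) / w\<^sup>2 * (3 / 2 * (1 + w\<^sup>2) * ((A 0)\<^sup>2 + (B 0)\<^sup>2) * exp (- (e / 3) * t) + K / (e / 3))"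
  proof (intro mult_left_mono)
    have "V 0 * exp (- (e / 3) * t) \<le> 3 / 2 * (1 + w\<^sup>2) * ((A 0)\<^sup>2 + (B 0)\<^sup>2) * exp (- (e / 3) * t)"
      using lyapunov_equivalent_norm(2)[OF assms(1) \<open>\<bar>e\<bar> \<le> w / 2\<close>, of "A 0" "B 0"]
      unfolding V_def by (intro mult_right_mono) auto
    then show "V t \<le> 3 / 2 * (1 + w\<^sup>2) * ((A 0)\<^sup>2 + (B 0)\<^sup>2) * exp (- (e / 3) * t) + K / (e / 3)"
      using V_decay by linarith
  qed simp
  also have "\<dots> = 3 * (1 + w\<^sup>2)\<^sup>2 / w\<^sup>2 * ((A 0)\<^sup>2 + (B 0)\<^sup>2) * exp (- (e / 3) * t)
           + 6 * (1 + w\<^sup>2) / (w\<^sup>2 * e) * K"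
    using assms(1,3) by (simp add: field_simps power2_eq_square)
  finally show ?thesis unfolding K_def .
qed

lemma abs_Im_cnj_mult_le_half:
  fixes x y :: complex
  assumes "(cmod x)\<^sup>2 + (cmod y)\<^sup>2 = 1"
  shows "\<bar>Im (cnj x * y)\<bar> \<le> 1 / 2"
proof -
  have "\<bar>Im (cnj x * y)\<bar> \<le> cmod x * cmod y"
    using abs_Im_le_cmod[of "cnj x * y"] by (simp add: norm_mult)
  also have "\<dots> \<le> ((cmod x)\<^sup>2 + (cmod y)\<^sup>2) / 2"
    using sum_squares_bound[of "cmod x" "cmod y"] by simp
  finally show ?thesis using assms by simp
qed

definition normalized_maxwell_bloch_solution ::
    "real \<Rightarrow> real \<Rightarrow> real \<Rightarrow> real \<Rightarrow> real \<Rightarrow> real \<Rightarrow> real \<Rightarrow> (real \<Rightarrow> real)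
      \<Rightarrow> (real \<Rightarrow> real) \<Rightarrow> (real \<Rightarrow> real) \<Rightarrow> (real \<Rightarrow> complex) \<Rightarrow> (real \<Rightarrow> complex) \<Rightarrow> bool"
  where "normalized_maxwell_bloch_solution \<Omega> \<sigma> c \<h> \<omega>\<^sub>1 \<omega>\<^sub>2 q Ap A B C\<^sub>1 C\<^sub>2 \<longleftrightarrow>
    continuous_on {0..} A \<and> continuous_on {0..} B \<and>
    continuous_on {0..} C\<^sub>1 \<and> continuous_on {0..} C\<^sub>2 \<and>
    (\<forall>t\<ge>0. (cmod (C\<^sub>1 t))\<^sup>2 + (cmod (C\<^sub>2 t))\<^sup>2 = 1) \<and>
    (\<forall>t>0.
       (A has_real_derivative B t) (at t) \<and>
       (B has_real_derivative
          (- \<Omega>\<^sup>2 * A t - \<sigma> * B t + c * (2 * q * Im (cnj (C\<^sub>1 t) * C\<^sub>2 t)))) (at t) \<and>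
       (\<exists>D\<^sub>1. (C\<^sub>1 has_vector_derivative D\<^sub>1) (at t) \<and>
          \<i> * complex_of_real \<h> * D\<^sub>1 =
            complex_of_real (\<h> * \<omega>\<^sub>1) * C\<^sub>1 t
            + \<i> * complex_of_real (q / c * (A t + Ap t)) * C\<^sub>2 t) \<and>
       (\<exists>D\<^sub>2. (C\<^sub>2 has_vector_derivative D\<^sub>2) (at t) \<and>
          \<i> * complex_of_real \<h> * D\<^sub>2 =
            complex_of_real (\<h> * \<omega>\<^sub>2) * C\<^sub>2 t
            - \<i> * complex_of_real (q / c * (A t + Ap t)) * C\<^sub>1 t))"

theorem corollary2p2:
  fixes \<Omega> \<sigma> c \<h> \<omega>\<^sub>1 \<omega>\<^sub>2 p \<omega> q :: real
    and Ap :: "real \<Rightarrow> real"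
  assumes "\<Omega> > 0" "\<sigma> > 0" "c > 0" "\<h> > 0" "\<omega>\<^sub>2 > \<omega>\<^sub>1" "p > 0"
    and "\<omega> = \<omega>\<^sub>2 - \<omega>\<^sub>1" and "q = \<omega> * p"
    and "continuous_on {0..} Ap"
  shows "\<exists>d\<^sub>1 d\<^sub>2 \<gamma>. d\<^sub>1 > 0 \<and> d\<^sub>2 > 0 \<and> \<gamma> > 0 \<and>
    (\<forall>(A::real \<Rightarrow> real) (B::real \<Rightarrow> real) (C\<^sub>1::real \<Rightarrow> complex) (C\<^sub>2::real \<Rightarrow> complex).
      (continuous_on {0..} A \<and> continuous_on {0..} B \<and>
       continuous_on {0..} C\<^sub>1 \<and> continuous_on {0..} C\<^sub>2 \<and>
       (\<forall>t\<ge>0. (cmod (C\<^sub>1 t))\<^sup>2 + (cmod (C\<^sub>2 t))\<^sup>2 = 1) \<and>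
       (\<forall>t>0.
          (A has_real_derivative B t) (at t) \<and>
          (B has_real_derivative
             (- \<Omega>\<^sup>2 * A t - \<sigma> * B t + c * (2 * q * Im (cnj (C\<^sub>1 t) * C\<^sub>2 t)))) (at t) \<and>
          (\<exists>D\<^sub>1. (C\<^sub>1 has_vector_derivative D\<^sub>1) (at t) \<and>
             \<i> * complex_of_real \<h> * D\<^sub>1 =
               complex_of_real (\<h> * \<omega>\<^sub>1) * C\<^sub>1 t
               + \<i> * complex_of_real (q / c * (A t + Ap t)) * C\<^sub>2 t) \<and>
          (\<exists>D\<^sub>2. (C\<^sub>2 has_vector_derivative D\<^sub>2) (at t) \<and>
             \<i> * complex_of_real \<h> * D\<^sub>2 =
               complex_of_real (\<h> * \<omega>\<^sub>2) * C\<^sub>2 t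
               - \<i> * complex_of_real (q / c * (A t + Ap t)) * C\<^sub>1 t)))
      \<longrightarrow> (\<forall>t>0. (A t)\<^sup>2 + (B t)\<^sup>2
                 \<le> d\<^sub>1 * ((A 0)\<^sup>2 + (B 0)\<^sup>2) * exp (- \<gamma> * t) + d\<^sub>2))"
proof -
  define e where "e = \<sigma> * \<Omega>\<^sup>2 / (4 * (\<Omega>\<^sup>2 + \<sigma>\<^sup>2))"
  define F where "F = c * q"
  define d\<^sub>1 where "d\<^sub>1 = 3 * (1 + \<Omega>\<^sup>2)\<^sup>2 / \<Omega>\<^sup>2"
  define d\<^sub>2 where "d\<^sub>2 = 6 * (1 + \<Omega>\<^sup>2) / (\<Omega>\<^sup>2 * e) * (2 * F\<^sup>2 / \<sigma> + e * F\<^sup>2 / \<Omega>\<^sup>2)"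
  have "q > 0" "F > 0" using assms(3,5-8) by (simp_all add: F_def)
  have "\<Omega>\<^sup>2 + \<sigma>\<^sup>2 > 0" using assms(1) by (simp add: add_pos_nonneg)
  then have "e > 0" and e_choice: "4 * e * (\<Omega>\<^sup>2 + \<sigma>\<^sup>2) = \<sigma> * \<Omega>\<^sup>2"
    using assms(1,2) by (simp_all add: e_def field_simps)
  have "1 + \<Omega>\<^sup>2 > 0" by (simp add: add_pos_nonneg)
  then have "d\<^sub>1 > 0" "d\<^sub>2 > 0" "e / 3 > 0"
    using assms(1,2) \<open>e > 0\<close> \<open>F > 0\<close> unfolding d\<^sub>1_def d\<^sub>2_def
    by (auto intro!: mult_pos_pos divide_pos_pos add_pos_pos)
  moreover have "\<forall>t>0. (A t)\<^sup>2 + (B t)\<^sup>2 \<le> d\<^sub>1 * ((A 0)\<^sup>2 + (B 0)\<^sup>2) * exp (- (e / 3) * t) + d\<^sub>2"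
    if sol: "normalized_maxwell_bloch_solution \<Omega> \<sigma> c \<h> \<omega>\<^sub>1 \<omega>\<^sub>2 q Ap A B C\<^sub>1 C\<^sub>2" for A B C\<^sub>1 C\<^sub>2
  proof (intro allI impI)
    fix t :: real assume "t > 0"
    have Im_bound: "\<bar>Im (cnj (C\<^sub>1 x) * C\<^sub>2 x)\<bar> \<le> 1 / 2" if "x > 0" for x
      using sol that by (intro abs_Im_cnj_mult_le_half) (simp add: normalized_maxwell_bloch_solution_def)
    have "\<bar>c * (2 * q * Im (cnj (C\<^sub>1 x) * C\<^sub>2 x))\<bar> \<le> F" if "x > 0" for x
      using Im_bound[OF that] assms(3) \<open>q > 0\<close> by (simp add: F_def abs_mult)
    then show "(A t)\<^sup>2 + (B t)\<^sup>2 \<le> d\<^sub>1 * ((A 0)\<^sup>2 + (B 0)\<^sup>2) * exp (- (e / 3) * t) + d\<^sub>2"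
      using sol \<open>t > 0\<close> unfolding d\<^sub>1_def d\<^sub>2_def normalized_maxwell_bloch_solution_def
      by (intro damped_oscillator_bound[OF assms(1,2) \<open>e > 0\<close> e_choice[THEN eq_refl]]) auto
  qed
  ultimately show ?thesis
    unfolding normalized_maxwell_bloch_solution_def[symmetric] by blast
qed

end
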